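(* Assume $\int t\,\mathcal{T}(\mathrm{d}t)<\infty$. If $\mathcal{T}^{\mathcal{R}}[\mathrm{id}]\geq\mathcal{T}[\mathrm{id}]$ for all reset laws $\mathcal{R}$, then $\overline{F}(0)=1$.
   Context: Standing assumptions: $\mathcal{T}$ is a probability law on the Borel sets of $[0,\infty]$ with $\mathcal{T}((0,\infty])>0$ and $\inf\mathrm{supp}(\mathcal{T})=0$; $\overline{F}(t):=\mathcal{T}((t,\infty])$; $\mathcal{Q}[\mathrm{id}]:=\int t\,\mathcal{Q}(\mathrm{d}t)$. A reset law is a probability law $\mathcal{R}$ on the Borel sets of $[0,\infty]$ with $\mathcal{R}((0,\infty])>0$ and $\mathcal{R}([0,\infty))>0$. Given a reset law $\mathcal{R}$: let $(T_k)$ be i.i.d. with law $\mathcal{T}$ and $(R_k)$ an independent i.i.d. sequence with law $\mathcal{R}$; $\mathcal{T}^{\mathcal{R}}$ is the law of $\tilde T$ defined a.s. by $\tilde T=R_1+\cdots+R_{k-1}+T_k$ on $\{R_1<T_1,\ldots,R_{k-1}<T_{k-1},T_k\leq R_k\}$, $k\in\mathbb{N}$. *)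

theory Defs
  imports "HOL-Probability.Probability"
begin

text \<open>Laws on the Borel sets of [0,\<infinity>] are modelled as measures on ennreal with Borel sets.\<close>

definition law_on_ext :: "ennreal measure \<Rightarrow> bool" where
  "law_on_ext M \<longleftrightarrow> prob_space M \<and> sets M = sets borel"

definition support :: "ennreal measure \<Rightarrow> ennreal set" where
  "support M = {x. \<forall>U. open U \<and> x \<in> U \<longrightarrow> emeasure M U > 0}"

definition mean :: "ennreal measure \<Rightarrow> ennreal" where
  "mean Q = (\<integral>\<^sup>+ t. t \<partial>Q)"

definition reset_law :: "ennreal measure \<Rightarrow> bool" where
  "reset_law R \<longleftrightarrow> law_on_ext R \<and> emeasure R {0<..} > 0 \<and> emeasure R {..<\<infinity>} > 0"

definition reset_space :: "ennreal measure \<Rightarrow> ennreal measure \<Rightarrow> (nat \<Rightarrow> ennreal \<times> ennreal) measure" where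
  "reset_space T R = (\<Pi>\<^sub>M k\<in>(UNIV::nat set). T \<Otimes>\<^sub>M R)"

text \<open>The reset time: R_0 + ... + R_{k-1} + T_k for the first k with T_k \<le> R_k
  (then R_i < T_i for all i < k); defined arbitrarily (\<infinity>) on the null event where no such k exists.\<close>
definition reset_time :: "(nat \<Rightarrow> ennreal \<times> ennreal) \<Rightarrow> ennreal" where
  "reset_time \<omega> = (if \<exists>k. fst (\<omega> k) \<le> snd (\<omega> k)
     then (let k = (LEAST k. fst (\<omega> k) \<le> snd (\<omega> k)) in (\<Sum>i<k. snd (\<omega> i)) + fst (\<omega> k))
     else \<infinity>)"

definition reset :: "ennreal measure \<Rightarrow> ennreal measure \<Rightarrow> ennreal measure" where
  "reset T R = distr (reset_space T R) borel reset_time"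

end

theory Submission
  imports Defs
begin

text \<open>Take the reset law that is \<open>0\<close> or \<open>\<infinity>\<close> with probability \<open>1/2\<close> each.
  A trial with \<open>R = \<infinity>\<close> ends the run at time \<open>T\<close>; a trial with \<open>R = 0\<close> restarts it at no cost
  exactly when \<open>T > 0\<close>. Conditioning on the first trial, the mean \<open>c\<close> of the reset time
  satisfies \<open>c \<le> E/2 + c p/2\<close>, where \<open>E = T[id]\<close> and \<open>p = T((0,\<infinity>])\<close>; this is made rigorous by
  truncating after \<open>n\<close> trials and noting that the run stops almost surely. Hence \<open>c \<le> E/(2 - p)\<close>,
  which is smaller than \<open>E\<close> whenever \<open>0 < p < 1\<close>.\<close>

lemma reset_time_unfold:
  "reset_time \<omega> = (if fst (\<omega> 0) \<le> snd (\<omega> 0) then fst (\<omega> 0)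
     else snd (\<omega> 0) + reset_time (\<lambda>n. \<omega> (Suc n)))"
proof (cases "fst (\<omega> 0) \<le> snd (\<omega> 0)")
  case True
  then have "(LEAST k. fst (\<omega> k) \<le> snd (\<omega> k)) = 0" by (simp add: Least_eq_0)
  with True show ?thesis unfolding reset_time_def by auto
next
  case first_resets: False
  show ?thesis
  proof (cases "\<exists>k. fst (\<omega> k) \<le> snd (\<omega> k)")
    case True
    then obtain k where k: "fst (\<omega> k) \<le> snd (\<omega> k)" by auto
    with first_resets have "\<exists>k. fst (\<omega> (Suc k)) \<le> snd (\<omega> (Suc k))" by (cases k) auto
    moreover have "(LEAST k. fst (\<omega> k) \<le> snd (\<omega> k)) =
        Suc (LEAST k. fst (\<omega> (Suc k)) \<le> snd (\<omega> (Suc k)))"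
      by (rule Least_Suc[OF k first_resets])
    ultimately show ?thesis using True first_resets unfolding reset_time_def Let_def
      by (simp del: sum.lessThan_Suc add: sum.lessThan_Suc_shift add.assoc)
  next
    case False
    then show ?thesis using first_resets unfolding reset_time_def by auto
  qed
qed

lemma reset_time_Stream:
  "reset_time ((!!) (x ## s)) = (if fst x \<le> snd x then fst x else snd x + reset_time ((!!) s))"
  by (subst reset_time_unfold) simp

lemma reset_time_measurable[measurable]:
  "reset_time \<in> borel_measurable (\<Pi>\<^sub>M k\<in>UNIV. borel \<Otimes>\<^sub>M borel)"
  unfolding reset_time_def Let_def by measurable

lemma snth_to_stream: "(!!) (to_stream \<omega>) = \<omega>"
  unfolding to_stream_def by (rule ext) simp

lemma reset_time_snth_measurable[measurable]:
  "(\<lambda>s. reset_time ((!!) s)) \<in> borel_measurable (stream_space (borel \<Otimes>\<^sub>M borel))"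
  using measurable_comp[OF measurable_snth_PiM reset_time_measurable] by (simp add: comp_def)

text \<open>The reset time seen through the first \<open>n\<close> trials only; it is \<open>0\<close> when none of them stops.\<close>
fun reset_time_upto :: "nat \<Rightarrow> (ennreal \<times> ennreal) stream \<Rightarrow> ennreal" where
  "reset_time_upto 0 s = 0"
| "reset_time_upto (Suc n) s = (if fst (shd s) \<le> snd (shd s) then fst (shd s)
     else snd (shd s) + reset_time_upto n (stl s))"

lemma reset_time_upto_eq_reset_time:
  "\<exists>k<n. fst (s !! k) \<le> snd (s !! k) \<Longrightarrow> reset_time_upto n s = reset_time ((!!) s)"
proof (induction n arbitrary: s)
  case (Suc n)
  show ?case
  proof (cases "fst (shd s) \<le> snd (shd s)")
    case True
    then show ?thesis by (subst stream.collapse[symmetric], subst reset_time_Stream) simp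
  next
    case False
    with Suc.prems obtain k where "k < n" "fst (stl s !! k) \<le> snd (stl s !! k)"
      by (metis less_Suc_eq_0_disj snth.simps)
    then have "reset_time_upto n (stl s) = reset_time ((!!) (stl s))" by (intro Suc.IH) auto
    with False show ?thesis by (subst stream.collapse[symmetric], subst reset_time_Stream) simp
  qed
qed simp

lemma incseq_reset_time_upto: "incseq (\<lambda>n. reset_time_upto n s)"
proof (rule incseq_SucI)
  show "reset_time_upto n s \<le> reset_time_upto (Suc n) s" for n
    by (induction n arbitrary: s) (auto intro: add_left_mono)
qed

lemma reset_time_upto_measurable[measurable]:
  "reset_time_upto n \<in> borel_measurable (stream_space (borel \<Otimes>\<^sub>M borel))"
proof (induction n)
  case (Suc n)
  note [measurable] = Suc
  show ?case by (simp only: reset_time_upto.simps) measurable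
qed simp

text \<open>\<open>M\<close> is the joint law of one trial \<open>(T\<^sub>k, R\<^sub>k)\<close>; the trial resets iff \<open>R\<^sub>k < T\<^sub>k\<close>.\<close>
locale trial_law = prob_space M for M :: "(ennreal \<times> ennreal) measure" +
  assumes sets_trial_law[measurable_cong]: "sets M = sets (borel \<Otimes>\<^sub>M borel)"
begin

lemma sets_stream_space_trial_law[measurable_cong]:
  "sets (stream_space M) = sets (stream_space (borel \<Otimes>\<^sub>M borel))"
  by (rule sets_stream_space_cong[OF sets_trial_law])

lemma space_trial_law: "space M = UNIV"
  using sets_eq_imp_space_eq[OF sets_trial_law] by (simp add: space_pair_measure)

lemma resets_in_sets[measurable]: "{x. snd x < fst x} \<in> sets M"
proof -
  have "{x \<in> space M. snd x < fst x} \<in> sets M" by measurable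
  then show ?thesis by (simp add: space_trial_law)
qed

lemma nn_integral_reset_time_upto_le:
  assumes renewal: "(\<integral>\<^sup>+x. min (fst x) (snd x) \<partial>M) + c * emeasure M {x. snd x < fst x} \<le> c"
  shows "(\<integral>\<^sup>+s. reset_time_upto n s \<partial>stream_space M) \<le> c"
proof (induction n)
  case (Suc n)
  interpret S: prob_space "stream_space M" by (rule prob_space_stream_space)
  have step: "(\<integral>\<^sup>+s. reset_time_upto (Suc n) (x ## s) \<partial>stream_space M)
      \<le> min (fst x) (snd x) + c * indicator {x. snd x < fst x} x" for x
  proof (cases "fst x \<le> snd x")
    case True
    then show ?thesis by (simp add: S.emeasure_space_1 min_def)
  next
    case False
    then have "(\<integral>\<^sup>+s. reset_time_upto (Suc n) (x ## s) \<partial>stream_space M)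
        = snd x + (\<integral>\<^sup>+s. reset_time_upto n s \<partial>stream_space M)"
      by (simp add: S.emeasure_space_1 nn_integral_add)
    also have "\<dots> \<le> snd x + c" using Suc by (rule add_left_mono)
    finally show ?thesis using False by (simp add: min_def)
  qed
  have "(\<integral>\<^sup>+s. reset_time_upto (Suc n) s \<partial>stream_space M)
      = (\<integral>\<^sup>+x. \<integral>\<^sup>+s. reset_time_upto (Suc n) (x ## s) \<partial>stream_space M \<partial>M)"
    by (rule nn_integral_stream_space) measurable
  also have "\<dots> \<le> (\<integral>\<^sup>+x. min (fst x) (snd x) + c * indicator {x. snd x < fst x} x \<partial>M)"
    by (rule nn_integral_mono) (rule step)
  also have "\<dots> = (\<integral>\<^sup>+x. min (fst x) (snd x) \<partial>M) + c * emeasure M {x. snd x < fst x}"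
    by (subst nn_integral_add) (auto simp: nn_integral_cmult)
  finally show ?case using renewal by simp
qed simp

lemma AE_reset_time_stops:
  assumes "emeasure M {x. snd x < fst x} < 1"
  shows "AE s in stream_space M. \<exists>k. fst (s !! k) \<le> snd (s !! k)"
proof -
  interpret S: prob_space "stream_space M" by (rule prob_space_stream_space)
  define never :: "(ennreal \<times> ennreal) stream set"
    where "never = {s. \<forall>k. snd (s !! k) < fst (s !! k)}"
  have never_sets[measurable]: "never \<in> sets (stream_space M)"
  proof -
    have "{s \<in> space (stream_space M). \<forall>k. snd (s !! k) < fst (s !! k)} \<in> sets (stream_space M)"
      by measurable
    then show ?thesis by (simp add: never_def space_stream_space space_trial_law)
  qed
  have never_Stream:
    "indicator never (x ## s) = indicator {x. snd x < fst x} x * (indicator never s :: ennreal)" for x s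
  proof -
    have "(\<forall>k. snd ((x ## s) !! k) < fst ((x ## s) !! k)) \<longleftrightarrow>
        snd x < fst x \<and> (\<forall>k. snd (s !! k) < fst (s !! k))"
      by (metis not0_implies_Suc snth.simps(1) snth_Stream stream.sel(1))
    then show ?thesis by (simp add: never_def split: split_indicator)
  qed
  have "emeasure (stream_space M) never
      = (\<integral>\<^sup>+x. \<integral>\<^sup>+s. indicator never (x ## s) \<partial>stream_space M \<partial>M)"
    unfolding nn_integral_indicator[OF never_sets, symmetric]
    by (rule nn_integral_stream_space) measurable
  also have "\<dots> = (\<integral>\<^sup>+x. indicator {x. snd x < fst x} x * emeasure (stream_space M) never \<partial>M)"
    by (simp add: never_Stream nn_integral_cmult)
  also have "\<dots> = emeasure M {x. snd x < fst x} * emeasure (stream_space M) never"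
    by (simp add: nn_integral_multc)
  finally have fixpoint: "emeasure (stream_space M) never
      = emeasure M {x. snd x < fst x} * emeasure (stream_space M) never" .
  have "emeasure (stream_space M) never = 0"
  proof (rule ccontr)
    assume "emeasure (stream_space M) never \<noteq> 0"
    then have "emeasure M {x. snd x < fst x} * emeasure (stream_space M) never
        < 1 * emeasure (stream_space M) never"
      by (intro ennreal_mult_strict_right_mono assms)
        (simp_all add: zero_less_iff_neq_zero less_top[symmetric] S.emeasure_finite)
    with fixpoint show False by simp
  qed
  then show ?thesis
    by (intro AE_I'[of never]) (auto simp: null_sets_def never_sets, auto simp: never_def not_le)
qed

lemma nn_integral_reset_time_le:
  assumes renewal: "(\<integral>\<^sup>+x. min (fst x) (snd x) \<partial>M) + c * emeasure M {x. snd x < fst x} \<le> c"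
    and "emeasure M {x. snd x < fst x} < 1"
  shows "(\<integral>\<^sup>+\<omega>. reset_time \<omega> \<partial>(\<Pi>\<^sub>M k\<in>UNIV. M)) \<le> c"
proof -
  have "(\<integral>\<^sup>+\<omega>. reset_time \<omega> \<partial>(\<Pi>\<^sub>M k\<in>UNIV. M))
      = (\<integral>\<^sup>+\<omega>. reset_time ((!!) (to_stream \<omega>)) \<partial>(\<Pi>\<^sub>M k\<in>UNIV. M))"
    by (simp only: snth_to_stream)
  also have "\<dots> = (\<integral>\<^sup>+s. reset_time ((!!) s) \<partial>stream_space M)"
    by (subst stream_space_eq_distr, rule nn_integral_distr[symmetric]) measurable
  also have "\<dots> \<le> (\<integral>\<^sup>+s. (SUP n. reset_time_upto n s) \<partial>stream_space M)"
  proof (rule nn_integral_mono_AE)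
    show "AE s in stream_space M. reset_time ((!!) s) \<le> (SUP n. reset_time_upto n s)"
      using AE_reset_time_stops[OF assms(2)]
    proof eventually_elim
      case (elim s)
      then obtain k where "fst (s !! k) \<le> snd (s !! k)" by blast
      then have "reset_time ((!!) s) = reset_time_upto (Suc k) s"
        by (intro reset_time_upto_eq_reset_time[symmetric]) auto
      then show ?case by (metis SUP_upper UNIV_I)
    qed
  qed
  also have "\<dots> = (SUP n. \<integral>\<^sup>+s. reset_time_upto n s \<partial>stream_space M)"
    by (rule nn_integral_monotone_convergence_SUP)
      (use incseq_reset_time_upto in \<open>auto simp: incseq_def le_fun_def\<close>)
  also have "\<dots> \<le> c"
    by (rule SUP_least) (rule nn_integral_reset_time_upto_le[OF renewal])
  finally show ?thesis .
qed

end

lemma mean_eq_0_iff: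
  assumes "law_on_ext T"
  shows "mean T = 0 \<longleftrightarrow> emeasure T {0<..} = 0"
proof -
  have [measurable_cong]: "sets T = sets borel" using assms by (simp add: law_on_ext_def)
  then have "{t \<in> space T. t \<noteq> 0} = {0<..}"
    by (auto simp: sets_eq_imp_space_eq[of T borel] zero_less_iff_neq_zero)
  then show ?thesis
    unfolding mean_def by (subst nn_integral_0_iff) simp_all
qed

lemma law_on_ext_pair_trial_law:
  assumes "law_on_ext T" "law_on_ext R"
  shows "trial_law (T \<Otimes>\<^sub>M R)"
proof -
  interpret pair_prob_space T R
    using assms by (simp add: law_on_ext_def pair_prob_space_def pair_sigma_finite_def
        prob_space_imp_sigma_finite)
  show ?thesis
    using assms by unfold_locales (simp add: law_on_ext_def cong: sets_pair_measure_cong)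
qed

lemma mean_reset_le:
  assumes "law_on_ext T" "law_on_ext R"
    and "(\<integral>\<^sup>+x. min (fst x) (snd x) \<partial>(T \<Otimes>\<^sub>M R)) + c * emeasure (T \<Otimes>\<^sub>M R) {x. snd x < fst x} \<le> c"
    and "emeasure (T \<Otimes>\<^sub>M R) {x. snd x < fst x} < 1"
  shows "mean (reset T R) \<le> c"
proof -
  interpret trial_law "T \<Otimes>\<^sub>M R" using assms(1,2) by (rule law_on_ext_pair_trial_law)
  have "mean (reset T R) = (\<integral>\<^sup>+\<omega>. reset_time \<omega> \<partial>(\<Pi>\<^sub>M k\<in>UNIV. T \<Otimes>\<^sub>M R))"
    unfolding mean_def reset_def reset_space_def by (rule nn_integral_distr) measurable
  also have "\<dots> \<le> c" using assms(3,4) by (rule nn_integral_reset_time_le)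
  finally show ?thesis .
qed

definition coin_reset_law :: "ennreal measure" where
  "coin_reset_law = distr (measure_pmf (bernoulli_pmf (1/2))) borel (\<lambda>b. if b then 0 else \<infinity>)"

lemma sets_coin_reset_law[simp, measurable_cong]: "sets coin_reset_law = sets borel"
  by (simp add: coin_reset_law_def)

lemma nn_integral_coin_reset_law:
  "f \<in> borel_measurable borel \<Longrightarrow> (\<integral>\<^sup>+r. f r \<partial>coin_reset_law) = (f 0 + f \<infinity>) / 2"
  unfolding coin_reset_law_def
  by (subst nn_integral_distr) (auto simp: nn_integral_measure_pmf_finite UNIV_bool divide_ennreal_def distrib_right)

lemma emeasure_coin_reset_law:
  "A \<in> sets borel \<Longrightarrow> emeasure coin_reset_law A = (indicator A 0 + indicator A \<infinity>) / 2"
  using nn_integral_coin_reset_law[of "indicator A"] by simp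

lemma law_on_ext_coin_reset_law: "law_on_ext coin_reset_law"
  unfolding law_on_ext_def coin_reset_law_def
  by (auto intro: prob_space.prob_space_distr simp: prob_space_measure_pmf)

lemma reset_law_coin_reset_law: "reset_law coin_reset_law"
  using law_on_ext_coin_reset_law
  by (simp add: reset_law_def emeasure_coin_reset_law ennreal_zero_less_divide)

lemma nn_integral_coin_trial:
  assumes "law_on_ext T" "f \<in> borel_measurable (borel \<Otimes>\<^sub>M borel)"
  shows "(\<integral>\<^sup>+x. f x \<partial>(T \<Otimes>\<^sub>M coin_reset_law)) = (\<integral>\<^sup>+t. (f (t, 0) + f (t, \<infinity>)) / 2 \<partial>T)"
proof -
  interpret coin: prob_space coin_reset_law
    using law_on_ext_coin_reset_law by (simp add: law_on_ext_def)
  have [measurable_cong]: "sets T = sets borel" using assms(1) by (simp add: law_on_ext_def)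
  have "(\<integral>\<^sup>+x. f x \<partial>(T \<Otimes>\<^sub>M coin_reset_law)) = (\<integral>\<^sup>+t. \<integral>\<^sup>+r. f (t, r) \<partial>coin_reset_law \<partial>T)"
    using assms(2) by (intro coin.nn_integral_fst[symmetric]) measurable
  also have "\<dots> = (\<integral>\<^sup>+t. (f (t, 0) + f (t, \<infinity>)) / 2 \<partial>T)"
    using assms(2) by (intro nn_integral_cong nn_integral_coin_reset_law measurable_Pair2) simp_all
  finally show ?thesis .
qed

lemma nn_integral_min_coin_trial:
  assumes "law_on_ext T"
  shows "(\<integral>\<^sup>+x. min (fst x) (snd x) \<partial>(T \<Otimes>\<^sub>M coin_reset_law)) = mean T / 2"
proof -
  have [measurable_cong]: "sets T = sets borel" using assms(1) by (simp add: law_on_ext_def)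
  show ?thesis
    unfolding mean_def using assms
    by (subst nn_integral_coin_trial) (simp_all add: nn_integral_divide)
qed

lemma emeasure_resets_coin_trial:
  assumes "law_on_ext T"
  shows "emeasure (T \<Otimes>\<^sub>M coin_reset_law) {x. snd x < fst x} = emeasure T {0<..} / 2"
proof -
  have [measurable_cong]: "sets T = sets borel" using assms(1) by (simp add: law_on_ext_def)
  have "{x. snd x < fst x} \<in> sets (T \<Otimes>\<^sub>M coin_reset_law)"
    using trial_law.resets_in_sets[OF law_on_ext_pair_trial_law[OF assms law_on_ext_coin_reset_law]] .
  then have "emeasure (T \<Otimes>\<^sub>M coin_reset_law) {x. snd x < fst x}
      = (\<integral>\<^sup>+t. indicator {0<..} t / 2 \<partial>T)"
    using assms by (subst nn_integral_indicator[symmetric], simp, subst nn_integral_coin_trial)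
      (auto intro!: nn_integral_cong split: split_indicator)
  also have "\<dots> = emeasure T {0<..} / 2"
    by (simp add: nn_integral_divide)
  finally show ?thesis .
qed

lemma mean_reset_coin_le:
  assumes T: "law_on_ext T"
    and e: "mean T = ennreal e" "0 \<le> e"
    and u: "emeasure T {0<..} = ennreal u" "0 \<le> u"
  shows "mean (reset T coin_reset_law) \<le> ennreal (e / (2 - u))"
proof (rule mean_reset_le[OF T])
  interpret prob_space T using T by (simp add: law_on_ext_def)
  have "u \<le> 1" using emeasure_le_1[of "{0<..}"] u by simp
  have "e / 2 + e / (2 - u) * (u / 2) = e / (2 - u)"
    using \<open>u \<le> 1\<close> by (simp add: field_simps)
  then show "(\<integral>\<^sup>+x. min (fst x) (snd x) \<partial>(T \<Otimes>\<^sub>M coin_reset_law))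
      + ennreal (e / (2 - u)) * emeasure (T \<Otimes>\<^sub>M coin_reset_law) {x. snd x < fst x}
      \<le> ennreal (e / (2 - u))"
    using \<open>u \<le> 1\<close> e u
    by (simp add: nn_integral_min_coin_trial emeasure_resets_coin_trial T ennreal_divide_numeral
        ennreal_mult'[symmetric] del: ennreal_plus flip: ennreal_plus)
  show "emeasure (T \<Otimes>\<^sub>M coin_reset_law) {x. snd x < fst x} < 1"
    using \<open>u \<le> 1\<close> u
    by (simp add: emeasure_resets_coin_trial T ennreal_divide_numeral)
qed (rule law_on_ext_coin_reset_law)

theorem mainTheorem14:
  fixes T :: "ennreal measure"
  assumes "law_on_ext T"
    and "emeasure T {0<..} > 0"
    and "Inf (support T) = 0"
    and "mean T < \<infinity>"
    and "\<And>R. reset_law R \<Longrightarrow> mean (reset T R) \<ge> mean T"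
  shows "emeasure T {0<..} = 1"
proof (rule ccontr)
  assume "emeasure T {0<..} \<noteq> 1"
  interpret prob_space T using assms(1) by (simp add: law_on_ext_def)
  obtain e where e: "mean T = ennreal e" "0 \<le> e"
    using assms(4) by (cases "mean T") auto
  obtain u where u: "emeasure T {0<..} = ennreal u" "0 \<le> u" "u < 1"
    using emeasure_le_1[of "{0<..}"] \<open>emeasure T {0<..} \<noteq> 1\<close>
    by (cases "emeasure T {0<..}") (auto simp: ennreal_less_iff)
  have "0 < e"
    using mean_eq_0_iff[OF assms(1)] assms(2) e by auto
  then have "e / (2 - u) < e" using u by (simp add: divide_less_eq)
  moreover have "ennreal e \<le> ennreal (e / (2 - u))"
    using assms(5)[OF reset_law_coin_reset_law] mean_reset_coin_le[OF assms(1) e u(1,2)] e by simp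
  ultimately show False using \<open>0 < e\<close> by (simp add: ennreal_le_iff2)
qed

end
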